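(* Under Algorithm 2(a) below (with field size $q>n$), in every slot $t$, the size $Q(t)$ of the sender's queue after the arrivals of slot $t$ have been appended (end of Step 3) satisfies $$Q(t)\le \sum_{j=1}^n\big(\dim V(t)-\dim V_j(t)\big),$$ where $V(t)=\mathbb{F}_q^{A(t)}$ is the sender's knowledge space, $A(t)$ is the total number of arrivals up to and including slot $t$, and $V_j(t)$ is receiver $j$'s knowledge space at that time. That is, the physical queue size is at most the sum over receivers of the backlog in degrees of freedom between the sender and that receiver.
   Context: Model: a sender broadcasts to $n$ receivers over a slotted packet erasure broadcast channel; packets are vectors over $\mathbb{F}_q$, indexed by arrival order; each slot some packets may arrive at the sender (just after the slot begins); the sender transmits at most one linear combination of its stored packets per slot; each receiver either receives it or suffers an erasure, and the sender learns via perfect feedback before the end of the slot which receivers received it. The knowledge space of a node is the space of global coefficient vectors (with respect to all original packets arrived so far) of linear combinations it can compute. Algorithm 2(a): The sender stores queue contents $\mathbf{y}_1,\dots,\mathbf{y}_Q$ (each a linear combination of original packets) and matrices $B,B_1,\dots,B_n$ with $Q$ columns whose rows are local coefficient vectors (with respect to the current queue contents); initially all are empty. In every slot: (Step 3) if $a$ packets arrive, append them at the end of the queue, set $B=I_{Q}$ for the new queue length $Q$, and append $a$ zero columns to each $B_j$. (Step 4) If the queue is nonempty, choose $\mathbf{g}\in\mathrm{span}(B)$ with $\mathbf{g}\notin\mathrm{span}(B_j)$ for every $j$ with $\mathrm{span}(B_j)\ne\mathrm{span}(B)$ (span means row space), and transmit $\sum_i g_i\mathbf{y}_i$; otherwise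 set $\mathbf{g}=\mathbf{0}$ and transmit nothing. (Step 5) For each $j$, if $\mathbf{g}\neq\mathbf{0}$ and receiver $j$ received the transmission, append $\mathbf{g}$ as a row of $B_j$. (Step 6) Let $B_\Delta$ be a basis of $\bigcap_j\mathrm{span}(B_j)$; let $B'$ be a completion of $B_\Delta$ to a basis of $\mathrm{span}(B)$ and $B''=B'\setminus B_\Delta$; for each $j$ let $B_j'$ be a completion of $B_\Delta$ to a basis of $\mathrm{span}(B_j)$ such that $B_j'':=B_j'\setminus B_\Delta\subseteq\mathrm{span}(B'')$. (Step 7) Replace the queue contents by the packets $\sum_i h_i\mathbf{y}_i$ for $\mathbf{h}\in B''$. (Step 8) Replace each $B_j$ by the matrix $X_j$ with $B_j''=X_jB''$, and set $B=I_{|B''|}$. *)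

theory Defs
  imports Complex_Main "HOL-Library.Function_Algebras"
begin

text \<open>Vectors over the field (both global coefficient vectors, indexed by the
arrival index of original packets 0,1,2,..., and local coefficient vectors,
indexed by queue position 0,...,Q-1) are represented as functions
nat => 'a with finite support.\<close>

definition fscale :: "'a::field \<Rightarrow> (nat \<Rightarrow> 'a) \<Rightarrow> (nat \<Rightarrow> 'a)" where
  "fscale c v = (\<lambda>i. c * v i)"

abbreviation fspan :: "(nat \<Rightarrow> 'a::field) set \<Rightarrow> (nat \<Rightarrow> 'a) set" where
  "fspan \<equiv> Modules.module.span fscale"

abbreviation findep :: "(nat \<Rightarrow> 'a::field) set \<Rightarrow> bool" where
  "findep S \<equiv> \<not> Modules.module.dependent fscale S"

abbreviation fdim :: "(nat \<Rightarrow> 'a::field) set \<Rightarrow> nat" where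
  "fdim \<equiv> Vector_Spaces.vector_space.dim fscale"

definition is_basis_list :: "(nat \<Rightarrow> 'a::field) list \<Rightarrow> (nat \<Rightarrow> 'a) set \<Rightarrow> bool" where
  "is_basis_list L S \<longleftrightarrow> distinct L \<and> findep (set L) \<and> fspan (set L) = S"

definition unitv :: "nat \<Rightarrow> nat \<Rightarrow> 'a::field" where
  "unitv i = (\<lambda>k. if k = i then 1 else 0)"

definition idrows :: "nat \<Rightarrow> (nat \<Rightarrow> 'a::field) list" where
  "idrows Q = map unitv [0..<Q]"

text \<open>Linear combination sum_i h_i * L_i (row vector h times the matrix with rows L).\<close>
definition lincomb :: "(nat \<Rightarrow> 'a::field) list \<Rightarrow> (nat \<Rightarrow> 'a) \<Rightarrow> (nat \<Rightarrow> 'a)" where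
  "lincomb L h = (\<lambda>m. \<Sum>i<length L. h i * (L ! i) m)"

text \<open>Sender state at the beginning of a slot: queue contents (as global coefficient
vectors), the matrix B and the matrices B_j (lists of rows = local coefficient vectors).\<close>
record 'a alg_state =
  queue :: "(nat \<Rightarrow> 'a) list"
  Bm :: "(nat \<Rightarrow> 'a) list"
  Bj :: "nat \<Rightarrow> (nat \<Rightarrow> 'a) list"

definition init_state :: "'a alg_state" where
  "init_state = \<lparr>queue = [], Bm = [], Bj = (\<lambda>j. [])\<rparr>"

text \<open>Step 3: a packets arrive; they are original packets with arrival indices
off, ..., off+a-1 (off = number of earlier arrivals); their global coefficient
vectors are unit vectors.  Appending zero columns to B_j does not change the
rows in our representation (local vectors are zero beyond the queue length).\<close>
definition step3 :: "nat \<Rightarrow> nat \<Rightarrow> 'a::field alg_state \<Rightarrow> 'a alg_state" where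
  "step3 off a s =
     (let ys = queue s @ map unitv [off..<off + a]
      in if a > 0 then s\<lparr>queue := ys, Bm := idrows (length ys)\<rparr> else s)"

definition valid_g :: "nat \<Rightarrow> 'a::field alg_state \<Rightarrow> (nat \<Rightarrow> 'a) \<Rightarrow> bool" where
  "valid_g n s g \<longleftrightarrow>
     (if queue s \<noteq> [] then
        g \<in> fspan (set (Bm s)) \<and>
        (\<forall>j\<in>{1..n}. fspan (set (Bj s j)) \<noteq> fspan (set (Bm s)) \<longrightarrow> g \<notin> fspan (set (Bj s j)))
      else g = 0)"

definition step5 :: "nat set \<Rightarrow> (nat \<Rightarrow> 'a::field) \<Rightarrow> 'a alg_state \<Rightarrow> 'a alg_state" where
  "step5 R g s = s\<lparr>Bj := (\<lambda>j. if g \<noteq> 0 \<and> j \<in> R then Bj s j @ [g] else Bj s j)\<rparr>"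

text \<open>Steps 6--8: s is the state after Step 5, s' the state at the start of the next slot.
BD = B_Delta, B2 = B'', Bj2 j = B_j'', X j = X_j.\<close>
definition valid_steps678 :: "nat \<Rightarrow> 'a::field alg_state \<Rightarrow> 'a alg_state \<Rightarrow> bool" where
  "valid_steps678 n s s' \<longleftrightarrow>
     (\<exists>BD B2 Bj2 X.
        is_basis_list BD (\<Inter>j\<in>{1..n}. fspan (set (Bj s j))) \<and>
        is_basis_list (BD @ B2) (fspan (set (Bm s))) \<and>
        (\<forall>j\<in>{1..n}. is_basis_list (BD @ Bj2 j) (fspan (set (Bj s j))) \<and>
                      set (Bj2 j) \<subseteq> fspan (set B2)) \<and>
        (\<forall>j\<in>{1..n}. map (lincomb B2) (X j) = Bj2 j \<and>
                      (\<forall>x\<in>set (X j). \<forall>k\<ge>length B2. x k = 0)) \<and>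
        queue s' = map (lincomb (queue s)) B2 \<and>
        Bj s' = X \<and>
        Bm s' = idrows (length B2))"

text \<open>A run of Algorithm 2(a): st t is the state at the start of slot t, a t the number
of arrivals in slot t, g t the chosen local coding vector, rcv t the set of receivers
that received the transmission of slot t.\<close>
definition arrivals_before :: "(nat \<Rightarrow> nat) \<Rightarrow> nat \<Rightarrow> nat" where
  "arrivals_before a t = (\<Sum>s<t. a s)"

definition after_step3 :: "(nat \<Rightarrow> nat) \<Rightarrow> (nat \<Rightarrow> 'a::field alg_state) \<Rightarrow> nat \<Rightarrow> 'a alg_state" where
  "after_step3 a st t = step3 (arrivals_before a t) (a t) (st t)"

definition is_run :: "nat \<Rightarrow> (nat \<Rightarrow> nat) \<Rightarrow> (nat \<Rightarrow> nat set) \<Rightarrow> (nat \<Rightarrow> nat \<Rightarrow> 'a::field)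
                      \<Rightarrow> (nat \<Rightarrow> 'a alg_state) \<Rightarrow> bool" where
  "is_run n a rcv g st \<longleftrightarrow>
     st 0 = init_state \<and>
     (\<forall>t. valid_g n (after_step3 a st t) (g t) \<and>
          valid_steps678 n (step5 (rcv t) (g t) (after_step3 a st t)) (st (Suc t)))"

definition total_arrivals :: "(nat \<Rightarrow> nat) \<Rightarrow> nat \<Rightarrow> nat" where
  "total_arrivals a t = (\<Sum>s\<le>t. a s)"

definition sender_knowledge :: "(nat \<Rightarrow> nat) \<Rightarrow> nat \<Rightarrow> (nat \<Rightarrow> 'a::field) set" where
  "sender_knowledge a t = {v. \<forall>i\<ge>total_arrivals a t. v i = 0}"

definition transmitted :: "(nat \<Rightarrow> nat) \<Rightarrow> (nat \<Rightarrow> nat \<Rightarrow> 'a::field) \<Rightarrow> (nat \<Rightarrow> 'a alg_state)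
                          \<Rightarrow> nat \<Rightarrow> (nat \<Rightarrow> 'a)" where
  "transmitted a g st s = lincomb (queue (after_step3 a st s)) (g s)"

definition receiver_knowledge :: "(nat \<Rightarrow> nat) \<Rightarrow> (nat \<Rightarrow> nat set) \<Rightarrow> (nat \<Rightarrow> nat \<Rightarrow> 'a::field)
                                 \<Rightarrow> (nat \<Rightarrow> 'a alg_state) \<Rightarrow> nat \<Rightarrow> nat \<Rightarrow> (nat \<Rightarrow> 'a) set" where
  "receiver_knowledge a rcv g st j t =
     fspan {transmitted a g st s | s. s < t \<and> j \<in> rcv s \<and> queue (after_step3 a st s) \<noteq> []}"

end

theory Submission
  imports Defs
begin

(*
  After the arrivals (Step 3) and after the feedback (Step 5) the queue contents span a
  Q-dimensional subspace U of the sender's knowledge space F^A, and each receiver's knowledge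
  space V_j satisfies V_j + U = F^A and V_j \<inter> U = L (span B_j), where L maps local to global
  coefficient vectors.  Steps 6-8 remove from the queue the part lying in the intersection of the
  spaces span B_j, after which that intersection is trivial.  Grassmann's formula gives
  dim F^A - dim V_j = Q - dim (V_j \<inter> U) \<ge> Q - dim (span B_j), and since the codimension of an
  intersection is at most the sum of the codimensions, the sum over j of Q - dim (span B_j) is
  at least Q.
*)

interpretation vs: vector_space "fscale :: 'a::field \<Rightarrow> (nat \<Rightarrow> 'a) \<Rightarrow> _"
  by unfold_locales (auto simp: fscale_def fun_eq_iff algebra_simps)

context vector_space
begin

lemma span_Un_span: "span (S \<union> span T) = span (S \<union> T)"
proof -
  have "S \<union> span T \<subseteq> span (S \<union> T)"
    using span_superset[of "S \<union> T"] span_mono[of T "S \<union> T"] by blast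
  moreover have "S \<union> T \<subseteq> span (S \<union> span T)"
    using span_superset[of "S \<union> span T"] span_superset[of T] by blast
  ultimately show ?thesis unfolding span_eq by blast
qed

lemma span_Un_eq_span_Un:
  assumes "span Y \<subseteq> span (V \<union> Y')" "Y' \<subseteq> span Y"
  shows "span (V \<union> Y') = span (V \<union> Y)"
  unfolding span_eq
  using assms span_superset[of "V \<union> Y"] span_superset[of "V \<union> Y'"] span_superset[of Y]
    span_mono[of Y "V \<union> Y"]
  by blast

lemma span_Un_span_absorb:
  assumes "X \<subseteq> span Y"
  shows "span (span (V \<union> X) \<union> Y) = span (V \<union> Y)"
proof -
  have "V \<union> X \<subseteq> span (V \<union> Y)"
    using assms span_superset[of "V \<union> Y"] span_mono[of Y "V \<union> Y"] by blast
  then have "span (V \<union> X) \<subseteq> span (V \<union> Y)" by (rule span_minimal[OF _ subspace_span])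
  then show ?thesis
    unfolding span_eq
    using span_superset[of "V \<union> Y"] span_superset[of "V \<union> X"] span_superset[of "span (V \<union> X) \<union> Y"]
    by blast
qed

lemma span_Int_span_of_disjoint:
  assumes indep: "independent (X \<union> Y)" and disj: "X \<inter> Y = {}"
  shows "span X \<inter> span Y = {0}"
proof
  show "span X \<inter> span Y \<subseteq> {0}"
  proof
    fix x assume x: "x \<in> span X \<inter> span Y"
    have "representation (X \<union> Y) x = representation X x"
         "representation (X \<union> Y) x = representation Y x"
      using x by (auto intro: representation_extend[OF indep])
    then have "representation (X \<union> Y) x = (\<lambda>b. 0)"
      using representation_ne_zero[of X x] representation_ne_zero[of Y x] disj by fastforce
    moreover have "x \<in> span (X \<union> Y)"
      using x span_mono[of X "X \<union> Y"] by auto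
    ultimately show "x \<in> {0}"
      using sum_nonzero_representation_eq[OF indep] by fastforce
  qed
qed (simp add: span_zero)

lemma span_Un_Int_subspace:
  assumes "subspace W" "Y \<subseteq> W" "span X \<inter> W = {0}"
  shows "span (X \<union> Y) \<inter> W = span Y"
proof
  have spanY: "span Y \<subseteq> W"
    using assms(2,1) by (rule span_minimal)
  show "span (X \<union> Y) \<inter> W \<subseteq> span Y"
  proof
    fix z assume z: "z \<in> span (X \<union> Y) \<inter> W"
    then obtain x w where xw: "z = x + w" "x \<in> span X" "w \<in> span Y"
      by (auto simp: span_Un)
    have "x = z - w" using xw(1) by simp
    then have "x \<in> W"
      using z spanY xw(3) assms(1) by (auto intro: subspace_diff)
    then have "x = 0" using xw(2) assms(3) by blast
    then show "z \<in> span Y" using xw by simp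
  qed
  show "span Y \<subseteq> span (X \<union> Y) \<inter> W"
    using spanY span_mono[of Y "X \<union> Y"] by auto
qed

lemma independent_card_le_dim_finite_span:
  assumes "independent X" "X \<subseteq> V" "V \<subseteq> span F" "finite F"
  shows "card X \<le> dim V"
proof -
  obtain W where W: "W \<subseteq> V" "independent W" "V \<subseteq> span W" "card W = dim V"
    using basis_exists by blast
  have "finite W"
    using independent_span_bound[OF assms(4) W(2)] W(1) assms(3) by blast
  moreover have "X \<subseteq> span W" using assms(2) W(3) by blast
  ultimately have "card X \<le> card W" using independent_span_bound[OF _ assms(1)] by blast
  then show ?thesis using W(4) by simp
qed

lemma dim_mono_finite_span:
  assumes "V \<subseteq> W" "W \<subseteq> span F" "finite F"
  shows "dim V \<le> dim W"
proof -
  obtain B where B: "B \<subseteq> V" "independent B" "V \<subseteq> span B" "card B = dim V"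
    using basis_exists by blast
  have "card B \<le> dim W"
    using B(1) assms(1) by (intro independent_card_le_dim_finite_span[OF B(2) _ assms(2,3)]) blast
  then show ?thesis using B(4) by simp
qed

lemma independent_Un_Diff:
  assumes C: "independent C" "finite C" and D: "independent D" "finite D" "D \<subseteq> T"
    and T: "subspace T" and B: "B \<subseteq> D" "span C \<inter> T \<subseteq> span B"
  shows "independent (C \<union> (D - B)) \<and> card (C \<union> (D - B)) = card C + card (D - B)"
proof -
  \<comment> \<open>the \<open>span C\<close>-part of a vector of \<open>D \<inter> span (C \<union> E)\<close> lies in \<open>T\<close>, hence in \<open>span B\<close>\<close>
  have "independent (C \<union> E) \<and> card (C \<union> E) = card C + card E"
    if "finite E" "E \<subseteq> D - B" for E
    using that
  proof (induction E rule: finite_subset_induct')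
    case empty
    then show ?case using C(1) by simp
  next
    case (insert d E)
    have "d \<notin> span (C \<union> E)"
    proof
      assume "d \<in> span (C \<union> E)"
      then obtain c e where ce: "d = c + e" "c \<in> span C" "e \<in> span E"
        by (auto simp: span_Un)
      have "E \<subseteq> T" using insert.hyps(3) D(3) by blast
      then have "e \<in> T" using ce(3) span_minimal[OF _ T] by blast
      moreover have "d \<in> T" using insert.hyps(2) D(3) by blast
      moreover have "c = d - e" using ce(1) by simp
      ultimately have "c \<in> T" using subspace_diff[OF T] by simp
      then have "c \<in> span (B \<union> E)" using ce(2) B(2) span_mono[of B "B \<union> E"] by blast
      moreover have "e \<in> span (B \<union> E)" using ce(3) span_mono[of E "B \<union> E"] by blast
      ultimately have "d \<in> span (B \<union> E)" using ce(1) span_add by simp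
      moreover have "B \<union> E \<subseteq> D - {d}" using B(1) insert.hyps(2,3,4) by blast
      ultimately have "d \<in> span (D - {d})" using span_mono[of "B \<union> E" "D - {d}"] by blast
      then show False using D(1) insert.hyps(2) unfolding dependent_def by blast
    qed
    moreover from this have "d \<notin> C \<union> E" using span_superset[of "C \<union> E"] by blast
    ultimately show ?case
      using insert.IH independent_insertI[of d "C \<union> E"] C(2) insert.hyps(1) by simp
  qed
  from this[of "D - B"] show ?thesis using D(2) by simp
qed

lemma dim_add_dim_le_span_Un_Int:
  assumes S: "subspace S" and T: "subspace T"
    and fin: "finite F" "S \<subseteq> span F" "T \<subseteq> span F"
  shows "dim S + dim T \<le> dim (span (S \<union> T)) + dim (S \<inter> T)"
proof -
  obtain B where B: "B \<subseteq> S \<inter> T" "independent B" "S \<inter> T \<subseteq> span B" "card B = dim (S \<inter> T)"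
    using basis_exists by blast
  obtain C where C: "C \<subseteq> S" "independent C" "S \<subseteq> span C" "card C = dim S"
    using basis_exists by blast
  obtain D where D: "B \<subseteq> D" "D \<subseteq> T" "independent D" "T \<subseteq> span D"
    using maximal_independent_subset_extend[of B T] B(1,2) by blast
  have "finite C"
    using independent_span_bound[OF fin(1) C(2)] C(1) fin(2) by blast
  have "finite D"
    using independent_span_bound[OF fin(1) D(3)] D(2) fin(3) by blast
  have "span C = S"
    using span_minimal[OF C(1) S] C(3) by (rule antisym)
  then have indep: "independent (C \<union> (D - B))"
    and card: "card (C \<union> (D - B)) = card C + card (D - B)"
    using independent_Un_Diff[OF C(2) \<open>finite C\<close> D(3) \<open>finite D\<close> D(2) T D(1)] B(3) by auto
  have "span (S \<union> T) \<subseteq> span F"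
    using fin(2,3) span_minimal[of "S \<union> T" "span F"] by simp
  moreover have "C \<union> (D - B) \<subseteq> span (S \<union> T)"
    using C(1) D(2) span_superset[of "S \<union> T"] by blast
  ultimately have "card (C \<union> (D - B)) \<le> dim (span (S \<union> T))"
    using independent_card_le_dim_finite_span[OF indep _ _ fin(1)] by blast
  moreover have "dim T = card D" using D(2-4) basis_card_eq_dim by auto
  moreover have "card D = card (D - B) + card B"
    using \<open>finite D\<close> D(1) card_Diff_subset[of B D] card_mono[of D B] finite_subset[of B D] by simp
  ultimately show ?thesis using C(4) B(4) card by linarith
qed

lemma codim_Inter_le_sum_codim:
  assumes J: "finite J" "J \<noteq> {}"
    and W: "subspace W" "finite F" "W \<subseteq> span F"
    and U: "\<And>j. j \<in> J \<Longrightarrow> subspace (U j) \<and> U j \<subseteq> W"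
  shows "int (dim W) - int (dim (\<Inter>j\<in>J. U j)) \<le> (\<Sum>j\<in>J. int (dim W) - int (dim (U j)))"
  using J U
proof (induction J rule: finite_ne_induct)
  case (singleton x)
  then show ?case by simp
next
  case (insert x J)
  define I where "I = (\<Inter>j\<in>J. U j)"
  have Ux: "subspace (U x)" "U x \<subseteq> W" using insert.prems by auto
  obtain j0 where "j0 \<in> J" using insert.hyps(2) by blast
  have I: "subspace I" "I \<subseteq> W"
    using insert.prems \<open>j0 \<in> J\<close> unfolding I_def by (blast intro: subspace_Int)+
  have "dim (U x) + dim I \<le> dim (span (U x \<union> I)) + dim (U x \<inter> I)"
    using dim_add_dim_le_span_Un_Int[OF Ux(1) I(1) W(2)] Ux(2) I(2) W(3) by blast
  moreover have "dim (span (U x \<union> I)) \<le> dim W"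
    using dim_mono_finite_span[OF _ W(3,2)] span_minimal[of "U x \<union> I" W] Ux(2) I(2) W(1)
    by blast
  moreover have "int (dim W) - int (dim I) \<le> (\<Sum>j\<in>J. int (dim W) - int (dim (U j)))"
    using insert.IH insert.prems unfolding I_def by blast
  moreover have "(\<Inter>j\<in>insert x J. U j) = U x \<inter> I" by (simp add: I_def)
  ultimately show ?case using insert.hyps(1,3) by simp
qed

end

lemma sum_apply: "(\<Sum>x\<in>A. f x) i = (\<Sum>x\<in>A. f x i :: 'b::comm_monoid_add)"
  by (induction A rule: infinite_finite_induct) auto

definition coord_space :: "nat \<Rightarrow> (nat \<Rightarrow> 'a::field) set" where
  "coord_space k = {v. \<forall>i\<ge>k. v i = 0}"

lemma subspace_coord_space: "vs.subspace (coord_space k)"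
  by (auto simp: vs.subspace_def coord_space_def fscale_def)

lemma coord_space_mono: "k \<le> m \<Longrightarrow> coord_space k \<subseteq> coord_space m"
  by (auto simp: coord_space_def)

lemma span_subset_coord_space:
  assumes "S \<subseteq> coord_space k"
  shows "fspan S \<subseteq> coord_space k"
  using assms subspace_coord_space by (rule vs.span_minimal)

lemma unitv_eq_iff: "unitv i = (unitv j :: nat \<Rightarrow> 'a::field) \<longleftrightarrow> i = j"
  by (auto simp: unitv_def fun_eq_iff)

lemma set_idrows: "set (idrows k) = unitv ` {..<k}"
  by (auto simp: idrows_def)

lemma module_hom_lincomb: "module_hom fscale fscale (lincomb (y :: (nat \<Rightarrow> 'a::field) list))"
  unfolding module_hom_iff
  by (auto simp: lincomb_def fscale_def fun_eq_iff algebra_simps sum.distrib sum_distrib_left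
           intro: vs.module_axioms)

lemma lincomb_in_span: "lincomb y h \<in> fspan (set y)"
proof -
  have "lincomb y h = (\<Sum>i<length y. fscale (h i) (y ! i))"
    by (auto simp: lincomb_def fun_eq_iff sum_apply fscale_def)
  also have "\<dots> \<in> fspan (set y)"
    by (intro vs.span_sum vs.span_scale vs.span_base) auto
  finally show ?thesis .
qed

lemma lincomb_idrows: "v \<in> coord_space k \<Longrightarrow> lincomb (idrows k) v = v"
  by (auto simp: lincomb_def idrows_def unitv_def coord_space_def fun_eq_iff not_less
           if_distrib[of "\<lambda>x. _ * x"] cong: if_cong)

lemma span_unitv: "fspan (unitv ` {..<k}) = (coord_space k :: (nat \<Rightarrow> 'a::field) set)"
proof
  show "fspan (unitv ` {..<k}) \<subseteq> (coord_space k :: (nat \<Rightarrow> 'a) set)"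
    by (rule span_subset_coord_space) (auto simp: coord_space_def unitv_def)
  show "coord_space k \<subseteq> fspan (unitv ` {..<k} :: (nat \<Rightarrow> 'a) set)"
    using lincomb_in_span[of "idrows k"] lincomb_idrows by (metis set_idrows subsetI)
qed

lemma coord_space_Int_span_unitv:
  "coord_space A \<inter> fspan (unitv ` {A..<B}) = ({0} :: (nat \<Rightarrow> 'a::field) set)"
proof -
  have below: "fspan (unitv ` {A..<B}) \<subseteq> {v :: nat \<Rightarrow> 'a. \<forall>i<A. v i = 0}"
    by (rule vs.span_minimal) (auto simp: unitv_def vs.subspace_def fscale_def)
  have "x = 0" if "x \<in> coord_space A" "x \<in> fspan (unitv ` {A..<B})" for x :: "nat \<Rightarrow> 'a"
  proof (rule ext)
    fix i
    show "x i = 0 i" using that below by (cases "i < A") (auto simp: coord_space_def)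
  qed
  then show ?thesis
    using vs.span_zero by (auto simp: coord_space_def)
qed

lemma independent_Un_unitv:
  assumes "findep Y" "Y \<subseteq> coord_space A"
  shows "findep (Y \<union> unitv ` {A..<A + k})"
proof (induction k)
  case 0
  then show ?case using assms(1) by simp
next
  case (Suc k)
  have "Y \<union> unitv ` {A..<A + k} \<subseteq> coord_space (A + k)"
    using assms(2) coord_space_mono[of A "A + k"] by (auto simp: coord_space_def unitv_def)
  moreover have "unitv (A + k) \<notin> (coord_space (A + k) :: (nat \<Rightarrow> 'a) set)"
    by (simp add: coord_space_def unitv_def)
  ultimately have "unitv (A + k) \<notin> fspan (Y \<union> unitv ` {A..<A + k})"
    using span_subset_coord_space by blast
  moreover have "Y \<union> unitv ` {A..<A + Suc k} = insert (unitv (A + k)) (Y \<union> unitv ` {A..<A + k})"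
    by (auto simp: atLeastLessThanSuc)
  ultimately show ?case using vs.independent_insertI[OF _ Suc.IH] by simp
qed

lemma dim_coord_space: "fdim (coord_space k :: (nat \<Rightarrow> 'a::field) set) = k"
proof -
  have indep: "findep (unitv ` {..<k} :: (nat \<Rightarrow> 'a) set)"
    using independent_Un_unitv[of "{}" 0 k] by (simp add: atLeast0LessThan vs.independent_empty)
  have "fdim (coord_space k :: (nat \<Rightarrow> 'a) set) = fdim (fspan (unitv ` {..<k} :: (nat \<Rightarrow> 'a) set))"
    by (simp only: span_unitv)
  also have "\<dots> = card (unitv ` {..<k} :: (nat \<Rightarrow> 'a) set)"
    using indep by (rule vs.dim_span_eq_card_independent)
  also have "\<dots> = k"
    by (simp add: card_image inj_on_def unitv_eq_iff)
  finally show ?thesis .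
qed

lemma lincomb_unitv:
  assumes "i < length y"
  shows "lincomb y (unitv i) = y ! i"
proof
  fix m
  have "(\<Sum>k<length y. unitv i k * (y ! k) m) = (\<Sum>k<length y. if k = i then (y ! k) m else 0)"
    by (intro sum.cong) (auto simp: unitv_def)
  then show "lincomb y (unitv i) m = (y ! i) m"
    using assms by (simp add: lincomb_def)
qed

lemma lincomb_image_coord_space: "lincomb y ` coord_space (length y) = fspan (set y)"
proof -
  have "lincomb y ` unitv ` {..<length y} = set y"
    by (auto simp: lincomb_unitv in_set_conv_nth image_iff)
  then show ?thesis
    using module_hom.span_image[OF module_hom_lincomb, of y "unitv ` {..<length y}"]
    by (simp add: span_unitv)
qed

lemma inj_on_lincomb:
  assumes "distinct y" "findep (set y)"
  shows "inj_on (lincomb y) (coord_space (length y))"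
proof -
  have image: "lincomb y ` unitv ` {..<length y} = set y"
    by (auto simp: lincomb_unitv in_set_conv_nth image_iff)
  have "inj_on (lincomb y) (unitv ` {..<length y})"
    using assms(1) by (auto simp: inj_on_def lincomb_unitv nth_eq_iff_index_eq)
  then show ?thesis
    using module_hom.inj_on_span_iff_independent_image[OF module_hom_lincomb, of y]
      assms(2) image span_unitv by metis
qed

lemma distinct_independent_map_lincomb:
  assumes y: "distinct y" "findep (set y)"
    and B: "distinct B" "findep (set B)" "fspan (set B) \<subseteq> coord_space (length y)"
  shows "distinct (map (lincomb y) B) \<and> findep (set (map (lincomb y) B))"
proof -
  have inj: "inj_on (lincomb y) (fspan (set B))"
    using inj_on_lincomb[OF y] B(3) by (rule inj_on_subset)
  then have "distinct (map (lincomb y) B)"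
    using B(1) vs.span_superset[of "set B"] by (auto simp: distinct_map intro: inj_on_subset)
  moreover have "findep (set (map (lincomb y) B))"
    unfolding set_map by (rule module_hom.independent_injective_image[OF module_hom_lincomb B(2) inj])
  ultimately show ?thesis ..
qed

lemma lincomb_map_lincomb: "lincomb (map (lincomb y) B) h = lincomb y (lincomb B h)"
proof
  fix m
  have "(\<Sum>i<length B. h i * (\<Sum>k<length y. (B ! i) k * (y ! k) m))
      = (\<Sum>k<length y. (\<Sum>i<length B. h i * (B ! i) k) * (y ! k) m)"
    by (simp add: sum_distrib_left sum_distrib_right mult.assoc sum.swap[of _ "{..<length B}"])
  then show "lincomb (map (lincomb y) B) h m = lincomb y (lincomb B h) m"
    by (simp add: lincomb_def)
qed

lemma lincomb_append:
  assumes "h \<in> coord_space (length y)"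
  shows "lincomb (y @ z) h = lincomb y h"
proof
  fix m
  have "(\<Sum>i<length (y @ z). h i * ((y @ z) ! i) m) = (\<Sum>i<length y. h i * ((y @ z) ! i) m)"
    by (rule sum.mono_neutral_right) (use assms in \<open>auto simp: coord_space_def\<close>)
  then show "lincomb (y @ z) h m = lincomb y h m"
    by (simp add: lincomb_def nth_append)
qed

lemma dim_image_span_le:
  assumes f: "module_hom fscale fscale (f :: (nat \<Rightarrow> 'a::field) \<Rightarrow> nat \<Rightarrow> 'a)" and "finite F"
  shows "fdim (f ` fspan F) \<le> fdim (fspan F)"
proof -
  obtain B where B: "B \<subseteq> fspan F" "findep B" "fspan F \<subseteq> fspan B" "card B = fdim (fspan F)"
    using vs.basis_exists by blast
  have "finite B" using vs.independent_span_bound[OF assms(2) B(2,1)] by simp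
  have "fspan B = fspan F"
    using B(1,3) vs.span_minimal[OF B(1) vs.subspace_span] by auto
  then have "f ` fspan F = fspan (f ` B)"
    using module_hom.span_image[OF f, of B] by simp
  then have "fdim (f ` fspan F) \<le> card (f ` B)"
    using vs.dim_le_card'[of "f ` B"] \<open>finite B\<close> by simp
  also have "\<dots> \<le> card B" using \<open>finite B\<close> by (rule card_image_le)
  finally show ?thesis using B(4) by simp
qed

lemma span_Un_image_Int_image:
  fixes f :: "(nat \<Rightarrow> 'a::field) \<Rightarrow> nat \<Rightarrow> 'a"
  assumes f: "module_hom fscale fscale f" and E: "vs.subspace E" and V: "vs.subspace V"
    and VE: "V \<inter> f ` E = f ` fspan B" and B: "B \<subseteq> E" and G: "G \<subseteq> E"
  shows "fspan (V \<union> f ` G) \<inter> f ` E = f ` fspan (B \<union> G)"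
proof
  have spG: "fspan (f ` G) = f ` fspan G" by (rule module_hom.span_image[OF f])
  have sumVG: "fspan (V \<union> f ` G) = {v + w |v w. v \<in> V \<and> w \<in> f ` fspan G}"
    using vs.span_Un[of V "f ` G"] spG vs.span_eq_iff[THEN iffD2, OF V] by simp
  have "fspan G \<subseteq> E" "fspan (B \<union> G) \<subseteq> E"
    using B G by (simp_all add: vs.span_minimal[OF _ E])
  then have fG: "f ` fspan G \<subseteq> f ` E" and fBG: "f ` fspan (B \<union> G) \<subseteq> f ` E" by auto
  have fE: "vs.subspace (f ` E)" by (rule module_hom.subspace_image[OF f E])
  show "fspan (V \<union> f ` G) \<inter> f ` E \<subseteq> f ` fspan (B \<union> G)"
  proof
    fix x assume x: "x \<in> fspan (V \<union> f ` G) \<inter> f ` E"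
    then obtain v h where vh: "x = v + f h" "v \<in> V" "h \<in> fspan G"
      using sumVG by auto
    have "v = x - f h" using vh(1) by simp
    then have "v \<in> f ` E" using x vh(3) fG fE by (auto intro: vs.subspace_diff)
    with vh(2) VE obtain b where b: "v = f b" "b \<in> fspan B" by auto
    have "x = f (b + h)" using vh b module_hom.add[OF f] by simp
    moreover have "b + h \<in> fspan (B \<union> G)"
      using b(2) vh(3) vs.span_Un[of B G] by auto
    ultimately show "x \<in> f ` fspan (B \<union> G)" by blast
  qed
  show "f ` fspan (B \<union> G) \<subseteq> fspan (V \<union> f ` G) \<inter> f ` E"
  proof
    fix x assume "x \<in> f ` fspan (B \<union> G)"
    then obtain z where z: "x = f z" "z \<in> fspan (B \<union> G)" by blast
    then obtain b h where bh: "z = b + h" "b \<in> fspan B" "h \<in> fspan G"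
      using vs.span_Un[of B G] by auto
    have "f b \<in> V" using VE bh(2) by auto
    then have "f b + f h \<in> fspan (V \<union> f ` G)" using sumVG bh(3) by blast
    moreover have "x = f b + f h" using z(1) bh(1) module_hom.add[OF f] by simp
    moreover have "x \<in> f ` E" using fBG z by blast
    ultimately show "x \<in> fspan (V \<union> f ` G) \<inter> f ` E" by simp
  qed
qed

text \<open>\<open>A\<close> is the number of arrivals so far, \<open>V j\<close> stands for the knowledge space of receiver \<open>j\<close>,
  and \<open>coord_space A\<close> is the sender's knowledge space \<open>F\<^sup>A\<close>.\<close>

definition backlog_invariant
  :: "nat \<Rightarrow> nat \<Rightarrow> 'a::field alg_state \<Rightarrow> (nat \<Rightarrow> (nat \<Rightarrow> 'a) set) \<Rightarrow> bool" where
  "backlog_invariant n A s V \<longleftrightarrow>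
     distinct (queue s) \<and> findep (set (queue s)) \<and> set (queue s) \<subseteq> coord_space A \<and>
     Bm s = idrows (length (queue s)) \<and>
     (\<forall>j\<in>{1..n}. set (Bj s j) \<subseteq> coord_space (length (queue s)) \<and> vs.subspace (V j) \<and>
        fspan (V j \<union> set (queue s)) = coord_space A \<and>
        V j \<inter> fspan (set (queue s)) = lincomb (queue s) ` fspan (set (Bj s j)))"

definition no_common_knowledge :: "nat \<Rightarrow> 'a::field alg_state \<Rightarrow> bool" where
  "no_common_knowledge n s \<longleftrightarrow> (\<Inter>j\<in>{1..n}. fspan (set (Bj s j))) = {0}"

lemma backlog_invariant_span_Bj:
  assumes "backlog_invariant n A s V" "j \<in> {1..n}"
  shows "fspan (set (Bj s j)) \<subseteq> coord_space (length (queue s))"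
  using assms by (intro span_subset_coord_space) (simp add: backlog_invariant_def)

lemma dim_knowledge_add_queue_length_le:
  fixes s :: "'a::field alg_state"
  assumes inv: "backlog_invariant n A s V" and j: "j \<in> {1..n}"
  shows "fdim (V j) + length (queue s) \<le> A + fdim (fspan (set (Bj s j)))"
proof -
  define y where "y = queue s"
  have y: "distinct y" "findep (set y)" "set y \<subseteq> coord_space A"
    and J: "vs.subspace (V j)" "fspan (V j \<union> set y) = coord_space A"
      "V j \<inter> fspan (set y) = lincomb y ` fspan (set (Bj s j))"
    using inv j by (auto simp: backlog_invariant_def y_def)
  have "V j \<subseteq> fspan (unitv ` {..<A})" "fspan (set y) \<subseteq> fspan (unitv ` {..<A})"
    using J(2) vs.span_superset[of "V j \<union> set y"] span_subset_coord_space[OF y(3)]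
    by (auto simp: span_unitv)
  then have "fdim (V j) + fdim (fspan (set y))
      \<le> fdim (fspan (V j \<union> fspan (set y))) + fdim (V j \<inter> fspan (set y))"
    by (intro vs.dim_add_dim_le_span_Un_Int J(1) vs.subspace_span) auto
  also have "fspan (V j \<union> fspan (set y)) = coord_space A"
    using J(2) by (simp add: vs.span_Un_span)
  also have "fdim (V j \<inter> fspan (set y)) \<le> fdim (fspan (set (Bj s j)))"
    unfolding J(3) by (rule dim_image_span_le[OF module_hom_lincomb]) simp
  finally show ?thesis
    using vs.dim_eq_card_independent[OF y(2)] distinct_card[OF y(1)]
    by (simp add: dim_coord_space y_def)
qed

lemma queue_length_le_backlog:
  fixes s :: "'a::field alg_state"
  assumes inv: "backlog_invariant n A s V" and common: "no_common_knowledge n s" and "n \<ge> 1"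
  shows "int (length (queue s)) \<le> (\<Sum>j=1..n. int A - int (fdim (V j)))"
proof -
  define Q where "Q = length (queue s)"
  define T where "T j = fspan (set (Bj s j))" for j
  have "int (fdim (coord_space Q :: (nat \<Rightarrow> 'a) set)) - int (fdim (\<Inter>j\<in>{1..n}. T j))
      \<le> (\<Sum>j\<in>{1..n}. int (fdim (coord_space Q :: (nat \<Rightarrow> 'a) set)) - int (fdim (T j)))"
    by (rule vs.codim_Inter_le_sum_codim[where F = "unitv ` {..<Q}"])
      (use \<open>n \<ge> 1\<close> backlog_invariant_span_Bj[OF inv]
        in \<open>auto simp: subspace_coord_space span_unitv T_def Q_def\<close>)
  then have "int Q - int (fdim (\<Inter>j\<in>{1..n}. T j)) \<le> (\<Sum>j\<in>{1..n}. int Q - int (fdim (T j)))"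
    by (simp only: dim_coord_space)
  also have "(\<Inter>j\<in>{1..n}. T j) = fspan {}"
    using common by (simp add: no_common_knowledge_def T_def)
  also have "(\<Sum>j\<in>{1..n}. int Q - int (fdim (T j))) \<le> (\<Sum>j=1..n. int A - int (fdim (V j)))"
    by (rule sum_mono) (use dim_knowledge_add_queue_length_le[OF inv] in \<open>force simp: T_def Q_def\<close>)
  also have "fdim (fspan {} :: (nat \<Rightarrow> 'a) set) = 0"
    using vs.dim_span_eq_card_independent[OF vs.independent_empty] by simp
  finally show ?thesis by (simp add: Q_def)
qed

lemma Bj_step3 [simp]: "Bj (step3 A k s) = Bj s"
  by (simp add: step3_def Let_def)

lemma span_Un_unitv:
  assumes "fspan W = coord_space A"
  shows "fspan (W \<union> unitv ` {A..<A + k}) = coord_space (A + k)"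
proof -
  have "fspan (W \<union> unitv ` {A..<A + k}) = fspan (unitv ` {A..<A + k} \<union> W)"
    by (simp only: Un_commute)
  also have "\<dots> = fspan (unitv ` {A..<A + k} \<union> fspan W)"
    by (rule vs.span_Un_span[symmetric])
  also have "\<dots> = fspan (unitv ` {A..<A + k} \<union> fspan (unitv ` {..<A}))"
    by (simp add: assms span_unitv)
  also have "\<dots> = fspan (unitv ` ({A..<A + k} \<union> {..<A}))"
    by (simp add: vs.span_Un_span image_Un)
  also have "{A..<A + k} \<union> {..<A} = {..<A + k}" by auto
  finally show ?thesis by (simp add: span_unitv)
qed

lemma Int_span_Un_unitv:
  assumes V: "V \<subseteq> coord_space A" and Y: "Y \<subseteq> coord_space A"
  shows "V \<inter> fspan (Y \<union> unitv ` {A..<A + k}) = V \<inter> fspan Y"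
proof
  show "V \<inter> fspan (Y \<union> unitv ` {A..<A + k}) \<subseteq> V \<inter> fspan Y"
  proof
    fix z assume z: "z \<in> V \<inter> fspan (Y \<union> unitv ` {A..<A + k})"
    then obtain w m where wm: "z = w + m" "w \<in> fspan Y" "m \<in> fspan (unitv ` {A..<A + k})"
      by (auto simp: vs.span_Un)
    have "m = z - w" using wm(1) by simp
    then have "m \<in> coord_space A"
      using z V wm(2) span_subset_coord_space[OF Y] vs.subspace_diff[OF subspace_coord_space]
      by blast
    then have "m = 0" using wm(3) coord_space_Int_span_unitv by blast
    then show "z \<in> V \<inter> fspan Y" using z wm by simp
  qed
  show "V \<inter> fspan Y \<subseteq> V \<inter> fspan (Y \<union> unitv ` {A..<A + k})"
    using vs.span_mono[of Y "Y \<union> unitv ` {A..<A + k}"] by blast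
qed

lemma backlog_invariant_step3:
  fixes s :: "'a::field alg_state"
  assumes inv: "backlog_invariant n A s V"
  shows "backlog_invariant n (A + k) (step3 A k s) V"
proof (cases "k = 0")
  case True
  then show ?thesis using inv by (simp add: step3_def)
next
  case False
  define y where "y = queue s"
  define N where "N = (unitv ` {A..<A + k} :: (nat \<Rightarrow> 'a) set)"
  define y' where "y' = y @ map unitv [A..<A + k]"
  have step3: "step3 A k s = s\<lparr>queue := y', Bm := idrows (length y')\<rparr>"
    using False by (simp add: step3_def y'_def y_def Let_def)
  have y: "distinct y" "findep (set y)" "set y \<subseteq> coord_space A"
    using inv by (auto simp: backlog_invariant_def y_def)
  have set_y': "set y' = set y \<union> N" by (auto simp: y'_def N_def)
  have "N \<inter> coord_space A = {}" by (auto simp: N_def coord_space_def unitv_def)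
  then have distinct_y': "distinct y'"
    using y(1,3) by (auto simp: y'_def N_def distinct_map inj_on_def unitv_eq_iff)
  have indep_y': "findep (set y')"
    unfolding set_y' N_def by (rule independent_Un_unitv[OF y(2,3)])
  have y'_coord: "set y' \<subseteq> coord_space (A + k)"
    using y(3) coord_space_mono[of A "A + k"] by (auto simp: set_y' N_def coord_space_def unitv_def)
  have "set (Bj s j) \<subseteq> coord_space (length y') \<and> vs.subspace (V j) \<and>
      fspan (V j \<union> set y') = coord_space (A + k) \<and>
      V j \<inter> fspan (set y') = lincomb y' ` fspan (set (Bj s j))" if j: "j \<in> {1..n}" for j
  proof -
    have J: "set (Bj s j) \<subseteq> coord_space (length y)" "vs.subspace (V j)"
      "fspan (V j \<union> set y) = coord_space A"
      "V j \<inter> fspan (set y) = lincomb y ` fspan (set (Bj s j))"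
      using inv j by (auto simp: backlog_invariant_def y_def)
    have span_V_y': "fspan (V j \<union> set y') = coord_space (A + k)"
      using span_Un_unitv[OF J(3)] by (simp add: set_y' N_def Un_assoc)
    have "V j \<subseteq> coord_space A"
      using J(3) vs.span_superset[of "V j \<union> set y"] by blast
    then have "V j \<inter> fspan (set y') = V j \<inter> fspan (set y)"
      unfolding set_y' N_def by (rule Int_span_Un_unitv[OF _ y(3)])
    also have "\<dots> = lincomb y' ` fspan (set (Bj s j))"
      unfolding J(4) y'_def
      by (intro image_cong refl lincomb_append[symmetric])
        (use span_subset_coord_space[OF J(1)] in blast)
    finally show ?thesis
      using J(1,2) span_V_y' coord_space_mono[of "length y" "length y'"] by (auto simp: y'_def)
  qed
  then show ?thesis
    using distinct_y' indep_y' y'_coord by (simp add: backlog_invariant_def step3)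
qed

lemma queue_step5 [simp]: "queue (step5 R g s) = queue s"
  and Bm_step5 [simp]: "Bm (step5 R g s) = Bm s"
  by (simp_all add: step5_def)

lemma backlog_invariant_step5:
  fixes s :: "'a::field alg_state"
  assumes inv: "backlog_invariant n A s V" and g: "g \<in> coord_space (length (queue s))"
  shows "backlog_invariant n A (step5 R g s)
           (\<lambda>j. fspan (V j \<union> (if j \<in> R \<and> queue s \<noteq> [] then {lincomb (queue s) g} else {})))"
proof -
  define y where "y = queue s"
  define L where "L = lincomb y"
  define V' where "V' j = fspan (V j \<union> (if j \<in> R \<and> y \<noteq> [] then {L g} else {}))" for j
  have Lg: "L g \<in> fspan (set y)"
    using g lincomb_image_coord_space by (auto simp: L_def y_def)
  have "set (Bj (step5 R g s) j) \<subseteq> coord_space (length y) \<and> vs.subspace (V' j) \<and>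
      fspan (V' j \<union> set y) = coord_space A \<and>
      V' j \<inter> fspan (set y) = L ` fspan (set (Bj (step5 R g s) j))" if j: "j \<in> {1..n}" for j
  proof -
    have J: "set (Bj s j) \<subseteq> coord_space (length y)" "vs.subspace (V j)"
      "fspan (V j \<union> set y) = coord_space A"
      "V j \<inter> fspan (set y) = L ` fspan (set (Bj s j))"
      using inv j by (auto simp: backlog_invariant_def y_def L_def)
    have "(if j \<in> R \<and> y \<noteq> [] then {L g} else {}) \<subseteq> fspan (set y)" using Lg by simp
    then have "fspan (V' j \<union> set y) = coord_space A"
      unfolding V'_def J(3)[symmetric] by (rule vs.span_Un_span_absorb)
    moreover have "V' j \<inter> fspan (set y) = L ` fspan (set (Bj (step5 R g s) j))"
    proof (cases "j \<in> R \<and> y \<noteq> []")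
      case True
      have "fspan (set (Bj s j) \<union> {g}) = fspan (set (Bj (step5 R g s) j))"
        using True by (cases "g = 0") (auto simp: step5_def)
      then show ?thesis
        using span_Un_image_Int_image[OF module_hom_lincomb[of y] subspace_coord_space J(2) _ J(1),
            where G = "{g}"]
          True J(4) g lincomb_image_coord_space[of y]
        by (simp add: V'_def L_def y_def)
    next
      case False
      then have "g = 0 \<or> j \<notin> R" using g by (auto simp: coord_space_def fun_eq_iff y_def)
      then have "Bj (step5 R g s) j = Bj s j" by (auto simp: step5_def)
      moreover have "V' j = V j" using False J(2) by (simp only: V'_def if_False Un_empty_right) simp
      ultimately show ?thesis using J(4) by simp
    qed
    moreover have "set (Bj (step5 R g s) j) \<subseteq> coord_space (length y)"
      using J(1) g by (simp add: step5_def y_def)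
    ultimately show ?thesis by (simp add: V'_def)
  qed
  then have "backlog_invariant n A (step5 R g s) V'"
    using inv by (simp add: backlog_invariant_def y_def L_def)
  moreover have "V' = (\<lambda>j. fspan (V j \<union> (if j \<in> R \<and> queue s \<noteq> [] then {lincomb (queue s) g} else {})))"
    by (simp add: fun_eq_iff V'_def L_def y_def)
  ultimately show ?thesis by simp
qed

lemma valid_steps678_complement:
  fixes s s' :: "'a::field alg_state"
  assumes v: "valid_steps678 n s s'" and Bm: "Bm s = idrows Q"
  obtains B2 where
    "queue s' = map (lincomb (queue s)) B2" "Bm s' = idrows (length B2)"
    "distinct B2" "findep (set B2)"
    "fspan ((\<Inter>j\<in>{1..n}. fspan (set (Bj s j))) \<union> set B2) = coord_space Q"
    "(\<Inter>j\<in>{1..n}. fspan (set (Bj s j))) \<inter> fspan (set B2) = {0}"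
    "\<And>j. j \<in> {1..n} \<Longrightarrow> set (Bj s' j) \<subseteq> coord_space (length B2)"
    "\<And>j. j \<in> {1..n} \<Longrightarrow>
       lincomb B2 ` fspan (set (Bj s' j)) = fspan (set (Bj s j)) \<inter> fspan (set B2)"
proof -
  obtain BD B2 Bj2 X where
    BD: "is_basis_list BD (\<Inter>j\<in>{1..n}. fspan (set (Bj s j)))" and
    B2: "is_basis_list (BD @ B2) (fspan (set (Bm s)))" and
    Bj2: "\<forall>j\<in>{1..n}. is_basis_list (BD @ Bj2 j) (fspan (set (Bj s j))) \<and>
                     set (Bj2 j) \<subseteq> fspan (set B2)" and
    X: "\<forall>j\<in>{1..n}. map (lincomb B2) (X j) = Bj2 j \<and> (\<forall>x\<in>set (X j). \<forall>k\<ge>length B2. x k = 0)" and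
    s': "queue s' = map (lincomb (queue s)) B2" "Bj s' = X" "Bm s' = idrows (length B2)"
    using v unfolding valid_steps678_def by blast
  have span_BD: "fspan (set BD) = (\<Inter>j\<in>{1..n}. fspan (set (Bj s j)))"
    using BD by (simp add: is_basis_list_def)
  have B2': "distinct (BD @ B2)" "findep (set BD \<union> set B2)"
    "fspan (set BD \<union> set B2) = coord_space Q"
    using B2 Bm by (auto simp: is_basis_list_def set_idrows span_unitv)
  have disjoint: "fspan (set BD) \<inter> fspan (set B2) = {0}"
    using B2' by (intro vs.span_Int_span_of_disjoint) auto
  show ?thesis
  proof
    show "fspan ((\<Inter>j\<in>{1..n}. fspan (set (Bj s j))) \<union> set B2) = coord_space Q"
      unfolding span_BD[symmetric] using vs.span_Un_span[of "set B2" "set BD"] B2'(3)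
      by (simp add: Un_commute)
    show "(\<Inter>j\<in>{1..n}. fspan (set (Bj s j))) \<inter> fspan (set B2) = {0}"
      using disjoint span_BD by simp
    show "distinct B2" "findep (set B2)"
      using B2' vs.independent_mono[of "set BD \<union> set B2" "set B2"] by auto
    fix j assume j: "j \<in> {1..n}"
    show "set (Bj s' j) \<subseteq> coord_space (length B2)"
      using X j s'(2) by (auto simp: coord_space_def)
    have "lincomb B2 ` fspan (set (X j)) = fspan (set (Bj2 j))"
      using module_hom.span_image[OF module_hom_lincomb, of B2 "set (X j)"] X j
      by (metis set_map)
    also have "\<dots> = fspan (set BD \<union> set (Bj2 j)) \<inter> fspan (set B2)"
      using Bj2 j disjoint by (intro vs.span_Un_Int_subspace[symmetric]) auto
    also have "fspan (set BD \<union> set (Bj2 j)) = fspan (set (Bj s j))"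
      using Bj2 j by (simp add: is_basis_list_def)
    finally show "lincomb B2 ` fspan (set (Bj s' j)) = fspan (set (Bj s j)) \<inter> fspan (set B2)"
      using s'(2) by simp
  qed (use s' in auto)
qed

lemma no_common_knowledge_reduced:
  fixes s' :: "'a::field alg_state"
  assumes n: "n \<ge> 1" and B2: "distinct B2" "findep (set B2)"
    and X: "\<And>j. j \<in> {1..n} \<Longrightarrow> set (Bj s' j) \<subseteq> coord_space (length B2)"
    and span_X: "\<And>j. j \<in> {1..n} \<Longrightarrow> lincomb B2 ` fspan (set (Bj s' j)) = T j \<inter> fspan (set B2)"
    and T_B2: "(\<Inter>j\<in>{1..n}. T j) \<inter> fspan (set B2) = {0}"
  shows "no_common_knowledge n s'"
  unfolding no_common_knowledge_def
proof (intro equalityI subsetI)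
  fix x assume x: "x \<in> (\<Inter>j\<in>{1..n}. fspan (set (Bj s' j)))"
  have mem: "lincomb B2 x \<in> T j \<and> lincomb B2 x \<in> fspan (set B2)" if j: "j \<in> {1..n}" for j
  proof -
    have "x \<in> fspan (set (Bj s' j))" using x j by blast
    then have "lincomb B2 x \<in> lincomb B2 ` fspan (set (Bj s' j))" by (rule imageI)
    then show ?thesis using span_X[OF j] by simp
  qed
  have one: "1 \<in> {1..n}" using n by simp
  have "lincomb B2 x \<in> (\<Inter>j\<in>{1..n}. T j)"
    by (rule INT_I) (erule mem[THEN conjunct1])
  moreover have "lincomb B2 x \<in> fspan (set B2)" using mem[OF one] by blast
  ultimately have "lincomb B2 x = 0" using T_B2 by blast
  then have "lincomb B2 x = lincomb B2 0" by (simp add: module_hom.zero[OF module_hom_lincomb])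
  moreover have "x \<in> coord_space (length B2)"
    using x one span_subset_coord_space[OF X[OF one]] by blast
  moreover have "0 \<in> coord_space (length B2)" by (simp add: coord_space_def)
  ultimately have "x = 0" by (rule inj_onD[OF inj_on_lincomb[OF B2]])
  then show "x \<in> {0}" by simp
qed (simp add: vs.span_zero)

lemma backlog_invariant_reduced:
  fixes s s' :: "'a::field alg_state"
  assumes inv: "backlog_invariant n A s V"
    and s': "queue s' = map (lincomb (queue s)) B2" "Bm s' = idrows (length B2)"
    and B2: "distinct B2" "findep (set B2)"
    and span_C_B2: "fspan ((\<Inter>j\<in>{1..n}. fspan (set (Bj s j))) \<union> set B2) = coord_space (length (queue s))"
    and X: "\<And>j. j \<in> {1..n} \<Longrightarrow> set (Bj s' j) \<subseteq> coord_space (length B2)"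
    and span_X: "\<And>j. j \<in> {1..n} \<Longrightarrow>
                   lincomb B2 ` fspan (set (Bj s' j)) = fspan (set (Bj s j)) \<inter> fspan (set B2)"
  shows "backlog_invariant n A s' V"
proof -
  define y where "y = queue s"
  define L where "L = lincomb y"
  define T where "T j = fspan (set (Bj s j))" for j
  define C where "C = (\<Inter>j\<in>{1..n}. T j)"
  define y' where "y' = map L B2"
  have y: "distinct y" "findep (set y)" "set y \<subseteq> coord_space A"
    using inv by (auto simp: backlog_invariant_def y_def)
  have span_C_B2': "fspan (C \<union> set B2) = coord_space (length y)"
    using span_C_B2 by (simp add: C_def T_def y_def)
  then have span_B2: "fspan (set B2) \<subseteq> coord_space (length y)"
    using vs.span_mono[of "set B2" "C \<union> set B2"] by simp
  have span_y: "fspan (set y) = fspan (L ` C \<union> set y')"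
    using module_hom.span_image[OF module_hom_lincomb, of y "C \<union> set B2"]
      lincomb_image_coord_space[of y] span_C_B2'
    by (simp add: image_Un y'_def L_def)
  have span_y': "fspan (set y') = L ` fspan (set B2)"
    unfolding y'_def L_def set_map by (rule module_hom.span_image[OF module_hom_lincomb])
  have y'_y: "set y' \<subseteq> fspan (set y)"
    using span_y vs.span_superset[of "L ` C \<union> set y'"] by blast
  have "set (Bj s' j) \<subseteq> coord_space (length y') \<and> vs.subspace (V j) \<and>
      fspan (V j \<union> set y') = coord_space A \<and>
      V j \<inter> fspan (set y') = lincomb y' ` fspan (set (Bj s' j))" if j: "j \<in> {1..n}" for j
  proof -
    have J: "vs.subspace (V j)" "fspan (V j \<union> set y) = coord_space A"
      "V j \<inter> fspan (set y) = L ` T j"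
      using inv j by (auto simp: backlog_invariant_def y_def L_def T_def)
    have "L ` C \<subseteq> V j" using J(3) j unfolding C_def by blast
    then have "fspan (set y) \<subseteq> fspan (V j \<union> set y')"
      unfolding span_y by (intro vs.span_mono) blast
    then have span_V_y': "fspan (V j \<union> set y') = coord_space A"
      using vs.span_Un_eq_span_Un[OF _ y'_y] J(2) by simp
    have "lincomb y' ` fspan (set (Bj s' j)) = L ` lincomb B2 ` fspan (set (Bj s' j))"
      by (simp add: y'_def L_def lincomb_map_lincomb image_image)
    also have "\<dots> = L ` (T j \<inter> fspan (set B2))"
      using span_X[OF j] by (simp add: T_def)
    also have "\<dots> = L ` T j \<inter> L ` fspan (set B2)"
      using inj_on_lincomb[OF y(1,2)] backlog_invariant_span_Bj[OF inv j] span_B2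
      by (intro inj_on_image_Int) (simp_all add: L_def T_def y_def)
    also have "\<dots> = V j \<inter> fspan (set y')"
      using J(3) span_y' y'_y vs.span_minimal[OF y'_y vs.subspace_span] by blast
    finally show ?thesis
      using X[OF j] J(1) span_V_y' by (simp add: y'_def)
  qed
  moreover have "set y' \<subseteq> coord_space A"
    using y'_y span_subset_coord_space[OF y(3)] by blast
  ultimately show ?thesis
    using distinct_independent_map_lincomb[OF y(1,2) B2 span_B2] s'
    by (simp add: backlog_invariant_def y'_def L_def y_def)
qed

lemma backlog_invariant_steps678:
  fixes s s' :: "'a::field alg_state"
  assumes n: "n \<ge> 1" and inv: "backlog_invariant n A s V" and v: "valid_steps678 n s s'"
  shows "backlog_invariant n A s' V \<and> no_common_knowledge n s'"
proof -
  have "Bm s = idrows (length (queue s))"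
    using inv by (simp add: backlog_invariant_def)
  from valid_steps678_complement[OF v this] obtain B2 where
    s': "queue s' = map (lincomb (queue s)) B2" "Bm s' = idrows (length B2)"
    and B2: "distinct B2" "findep (set B2)"
    and complement: "fspan ((\<Inter>j\<in>{1..n}. fspan (set (Bj s j))) \<union> set B2) = coord_space (length (queue s))"
      "(\<Inter>j\<in>{1..n}. fspan (set (Bj s j))) \<inter> fspan (set B2) = {0}"
    and X: "\<And>j. j \<in> {1..n} \<Longrightarrow> set (Bj s' j) \<subseteq> coord_space (length B2)"
    and span_X: "\<And>j. j \<in> {1..n} \<Longrightarrow>
       lincomb B2 ` fspan (set (Bj s' j)) = fspan (set (Bj s j)) \<inter> fspan (set B2)"
    by blast
  show ?thesis
    using backlog_invariant_reduced[OF inv s' B2 complement(1) X span_X]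
      no_common_knowledge_reduced[OF n B2 X span_X complement(2)] by blast
qed

lemma receiver_knowledge_Suc:
  "receiver_knowledge a rcv g st j (Suc t) =
     fspan (receiver_knowledge a rcv g st j t \<union>
       (if j \<in> rcv t \<and> queue (after_step3 a st t) \<noteq> []
        then {lincomb (queue (after_step3 a st t)) (g t)} else {}))"
proof -
  define P where "P = {transmitted a g st s | s. s < t \<and> j \<in> rcv s \<and> queue (after_step3 a st s) \<noteq> []}"
  define X where "X = (if j \<in> rcv t \<and> queue (after_step3 a st t) \<noteq> []
                       then {lincomb (queue (after_step3 a st t)) (g t)} else {})"
  have "{transmitted a g st s | s. s < Suc t \<and> j \<in> rcv s \<and> queue (after_step3 a st s) \<noteq> []}
      = P \<union> X"
    by (auto simp: P_def X_def less_Suc_eq transmitted_def)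
  then show ?thesis
    unfolding receiver_knowledge_def P_def[symmetric] X_def[symmetric]
    using vs.span_Un_span[of X P] by (simp only: Un_commute)
qed

lemma run_backlog_invariant:
  fixes st :: "nat \<Rightarrow> 'a::field alg_state"
  assumes n: "n \<ge> 1" and run: "is_run n a rcv g st"
  shows "backlog_invariant n (arrivals_before a t) (st t) (\<lambda>j. receiver_knowledge a rcv g st j t)
         \<and> no_common_knowledge n (st t)"
proof (induction t)
  case 0
  have "st 0 = init_state" using run by (simp add: is_run_def)
  then show ?case
    using n by (auto simp: backlog_invariant_def no_common_knowledge_def init_state_def
                  receiver_knowledge_def arrivals_before_def coord_space_def lincomb_def
                  vs.independent_empty fun_eq_iff idrows_def)
next
  case (Suc t)
  define s where "s = after_step3 a st t"
  define V where "V j = receiver_knowledge a rcv g st j t" for j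
  have A: "arrivals_before a (Suc t) = arrivals_before a t + a t"
    by (simp add: arrivals_before_def)
  have inv3: "backlog_invariant n (arrivals_before a (Suc t)) s V"
    unfolding s_def after_step3_def A V_def using Suc.IH by (intro backlog_invariant_step3) simp
  have g: "valid_g n s (g t)" and steps678: "valid_steps678 n (step5 (rcv t) (g t) s) (st (Suc t))"
    using run by (auto simp: is_run_def s_def)
  have "g t \<in> coord_space (length (queue s))"
  proof (cases "queue s = []")
    case True
    then show ?thesis using g by (simp add: valid_g_def coord_space_def)
  next
    case False
    have "Bm s = idrows (length (queue s))" using inv3 by (simp add: backlog_invariant_def)
    then show ?thesis using g False by (simp add: valid_g_def set_idrows span_unitv)
  qed
  note inv5 = backlog_invariant_step5[OF inv3 this, of "rcv t"]
  have "(\<lambda>j. receiver_knowledge a rcv g st j (Suc t))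
      = (\<lambda>j. fspan (V j \<union> (if j \<in> rcv t \<and> queue s \<noteq> [] then {lincomb (queue s) (g t)} else {})))"
    unfolding s_def V_def by (simp only: receiver_knowledge_Suc)
  with inv5 have "backlog_invariant n (arrivals_before a (Suc t)) (step5 (rcv t) (g t) s)
          (\<lambda>j. receiver_knowledge a rcv g st j (Suc t))"
    by simp
  then show ?case by (rule backlog_invariant_steps678[OF n _ steps678])
qed

text \<open>The hypothesis on the field size only guarantees that Step 4 can always choose a coding
  vector; the bound holds for every run.\<close>

theorem theorem2:
  fixes n :: nat and a :: "nat \<Rightarrow> nat" and rcv :: "nat \<Rightarrow> nat set"
    and g :: "nat \<Rightarrow> nat \<Rightarrow> 'a::{field, finite}" and st :: "nat \<Rightarrow> 'a alg_state"
  assumes "n \<ge> 1"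
    and "card (UNIV :: 'a set) > n"
    and "is_run n a rcv g st"
  shows "int (length (queue (after_step3 a st t)))
           \<le> (\<Sum>j=1..n. int (fdim (sender_knowledge a t))
                        - int (fdim (receiver_knowledge a rcv g st j t)))"
proof -
  have total: "total_arrivals a t = arrivals_before a t + a t"
    by (simp add: total_arrivals_def arrivals_before_def lessThan_Suc_atMost[symmetric])
  have "backlog_invariant n (total_arrivals a t) (after_step3 a st t)
          (\<lambda>j. receiver_knowledge a rcv g st j t)"
    and "no_common_knowledge n (after_step3 a st t)"
    using run_backlog_invariant[OF assms(1,3), of t]
    by (auto simp: total after_step3_def no_common_knowledge_def intro: backlog_invariant_step3)
  from queue_length_le_backlog[OF this assms(1)] show ?thesis
    by (simp add: sender_knowledge_def coord_space_def[symmetric] dim_coord_space)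
qed

end
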